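(* Let $(\Sigma,\theta)$ be a Noetherian space. The map $S$ sending a topology $\tau$ on $\Sigma^*$ to the topology generated by the sets $\uparrow_{\le^*}(UV)$ for $U,V\in\tau$ and $\uparrow_{\le^*}W$ for $W\in\theta$ is a topology expander over $\Sigma^*$.
   Context: $\Sigma^*$: finite words; $UV$: concatenation; letters identified with one-letter words; $\le$ the specialisation preorder of $\theta$; $\le^*$ Higman's ordering ($u\le^*w$ iff a strictly increasing map $h$ of positions satisfies $u_i\le w_{h(i)}$); $\uparrow_{\le^*}$ upward closure. Noetherian: every subset compact. A refinement function over $X$ is a map $R$ from topologies on $X$ to topologies on $X$, monotone for inclusion and preserving Noetherianity. For a topology $\tau$ and $H\subseteq X$, $\tau|_H$ is the topology on $X$ generated by $\{U\cap H:U\in\tau\}$. A topology expander is a refinement function $R$ such that for every Noetherian $\tau$ with $\tau\subseteq R(\tau)$ and every $H$ closed in $\tau$, $R(\tau)|_H=R(\tau|_H)|_H$. *)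

theory Defs
  imports "HOL-Analysis.Analysis" "HOL-Library.Sublist"
begin

text \<open>Topologies on a whole type X are values of type 'a topology with topspace = UNIV.\<close>

definition noetherian_top :: "'a topology \<Rightarrow> bool" where
  "noetherian_top \<tau> \<longleftrightarrow> (\<forall>K. K \<subseteq> topspace \<tau> \<longrightarrow> compactin \<tau> K)"

definition top_le :: "'a topology \<Rightarrow> 'a topology \<Rightarrow> bool" where
  "top_le \<tau> \<sigma> \<longleftrightarrow> (\<forall>U. openin \<tau> U \<longrightarrow> openin \<sigma> U)"

definition gen_top :: "'a set set \<Rightarrow> 'a topology" where
  "gen_top B = topology (generate_topology B)"

definition top_restrict :: "'a topology \<Rightarrow> 'a set \<Rightarrow> 'a topology" where
  "top_restrict \<tau> H = gen_top {U \<inter> H | U. openin \<tau> U}"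

definition refinement_function :: "('a topology \<Rightarrow> 'a topology) \<Rightarrow> bool" where
  "refinement_function R \<longleftrightarrow>
     (\<forall>\<tau>. topspace \<tau> = UNIV \<longrightarrow> topspace (R \<tau>) = UNIV)
   \<and> (\<forall>\<tau> \<sigma>. topspace \<tau> = UNIV \<longrightarrow> topspace \<sigma> = UNIV \<longrightarrow> top_le \<tau> \<sigma> \<longrightarrow> top_le (R \<tau>) (R \<sigma>))
   \<and> (\<forall>\<tau>. topspace \<tau> = UNIV \<longrightarrow> noetherian_top \<tau> \<longrightarrow> noetherian_top (R \<tau>))"

definition topology_expander :: "('a topology \<Rightarrow> 'a topology) \<Rightarrow> bool" where
  "topology_expander R \<longleftrightarrow> refinement_function R \<and>
     (\<forall>\<tau> H. topspace \<tau> = UNIV \<longrightarrow> noetherian_top \<tau> \<longrightarrow> top_le \<tau> (R \<tau>) \<longrightarrow> closedin \<tau> H \<longrightarrow>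
        top_restrict (R \<tau>) H = top_restrict (R (top_restrict \<tau> H)) H)"

definition spec_le :: "'a topology \<Rightarrow> 'a \<Rightarrow> 'a \<Rightarrow> bool" where
  "spec_le \<theta> x y \<longleftrightarrow> (\<forall>U. openin \<theta> U \<longrightarrow> x \<in> U \<longrightarrow> y \<in> U)"

definition higman_le :: "'a topology \<Rightarrow> 'a list \<Rightarrow> 'a list \<Rightarrow> bool" where
  "higman_le \<theta> = list_emb (spec_le \<theta>)"

definition up_higman :: "'a topology \<Rightarrow> 'a list set \<Rightarrow> 'a list set" where
  "up_higman \<theta> A = {w. \<exists>u\<in>A. higman_le \<theta> u w}"

definition word_concat :: "'a list set \<Rightarrow> 'a list set \<Rightarrow> 'a list set" where
  "word_concat U V = {u @ v | u v. u \<in> U \<and> v \<in> V}"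

text \<open>The map S of the theorem; a set W of letters is identified with the set of one-letter words.\<close>
definition S_map :: "'a topology \<Rightarrow> 'a list topology \<Rightarrow> 'a list topology" where
  "S_map \<theta> \<tau> = gen_top
     ({up_higman \<theta> (word_concat U V) | U V. openin \<tau> U \<and> openin \<tau> V}
      \<union> {up_higman \<theta> ((\<lambda>a. [a]) ` W) | W. openin \<theta> W})"

end

(*
  Noetherianity: S(\<tau>) is generated by the subbasic sets \<up>(UV) and \<up>W, and by Alexander's
  subbase theorem a generated topology is Noetherian as soon as every family of subbasic sets
  has a finite subfamily with the same union. This finite-union property
  holds for the open sets of a Noetherian space, survives finite unions of families and images under
  union-preserving maps such as R \<mapsto> \<up>{uv | (u, v) \<in> R}, and passes from two families to
  the rectangles U \<times> V by Ramsey's theorem: a sequence of rectangles each escaping all earlier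
  ones yields, on an infinite homogeneous set, a coordinate sequence escaping all earlier sets.

  Expander property: if H is \<tau>-closed and \<tau> \<subseteq> S(\<tau>), the complement of H is S(\<tau>)-open, hence
  upward closed for \<le>*, so H is downward closed. Every factor of a word of H then lies in H, whence
  \<up>(UV) \<inter> H = \<up>((U \<inter> H)(V \<inter> H)) \<inter> H. So the traces on H of the subbasic sets of S(\<tau>) only
  depend on the traces of \<tau> on H, which are also those of \<tau>|H.
*)

theory Submission
  imports Defs "HOL-Library.Ramsey"
begin

section \<open>Families of sets with finite subunions\<close>

definition noetherian_family :: "'a set set \<Rightarrow> bool" where
  "noetherian_family \<A> \<longleftrightarrow> (\<forall>\<G> \<subseteq> \<A>. \<exists>\<G>' \<subseteq> \<G>. finite \<G>' \<and> \<Union>\<G>' = \<Union>\<G>)"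

lemma noetherian_family_openin:
  assumes "noetherian_top \<tau>"
  shows "noetherian_family {U. openin \<tau> U}"
  unfolding noetherian_family_def
proof (intro allI impI)
  fix \<G> assume \<G>: "\<G> \<subseteq> {U. openin \<tau> U}"
  then have "compactin \<tau> (\<Union>\<G>)"
    using assms openin_subset unfolding noetherian_top_def by blast
  then obtain \<G>' where "finite \<G>'" "\<G>' \<subseteq> \<G>" "\<Union>\<G> \<subseteq> \<Union>\<G>'"
    using \<G> unfolding compactin_def by (metis mem_Collect_eq subset_eq order_refl)
  then show "\<exists>\<G>' \<subseteq> \<G>. finite \<G>' \<and> \<Union>\<G>' = \<Union>\<G>" by blast
qed

lemma noetherian_family_Un:
  assumes "noetherian_family \<A>" "noetherian_family \<B>"
  shows "noetherian_family (\<A> \<union> \<B>)"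
  unfolding noetherian_family_def
proof (intro allI impI)
  fix \<G> assume "\<G> \<subseteq> \<A> \<union> \<B>"
  obtain \<G>\<^sub>1 where "\<G>\<^sub>1 \<subseteq> \<G> \<inter> \<A>" "finite \<G>\<^sub>1" "\<Union>\<G>\<^sub>1 = \<Union>(\<G> \<inter> \<A>)"
    using assms(1) unfolding noetherian_family_def by (meson inf_le2)
  moreover obtain \<G>\<^sub>2 where "\<G>\<^sub>2 \<subseteq> \<G> \<inter> \<B>" "finite \<G>\<^sub>2" "\<Union>\<G>\<^sub>2 = \<Union>(\<G> \<inter> \<B>)"
    using assms(2) unfolding noetherian_family_def by (meson inf_le2)
  ultimately show "\<exists>\<G>' \<subseteq> \<G>. finite \<G>' \<and> \<Union>\<G>' = \<Union>\<G>"
    using \<open>\<G> \<subseteq> \<A> \<union> \<B>\<close> by (intro exI[of _ "\<G>\<^sub>1 \<union> \<G>\<^sub>2"]) auto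
qed

lemma noetherian_family_insert:
  assumes "noetherian_family \<A>"
  shows "noetherian_family (insert X \<A>)"
proof -
  have "finite \<G>" if "\<G> \<subseteq> {X}" for \<G> :: "'a set set"
    using that finite_subset by blast
  then have "noetherian_family {X}"
    unfolding noetherian_family_def by blast
  then show ?thesis
    using noetherian_family_Un[OF _ assms] by (metis insert_is_Un)
qed

lemma noetherian_family_image:
  assumes "noetherian_family \<A>" and k: "\<And>\<G>. k (\<Union>\<G>) = \<Union>(k ` \<G>)"
  shows "noetherian_family (k ` \<A>)"
  unfolding noetherian_family_def
proof (intro allI impI)
  fix \<G> assume "\<G> \<subseteq> k ` \<A>"
  then obtain \<H> where \<H>: "\<H> \<subseteq> \<A>" "\<G> = k ` \<H>"
    by (auto simp: subset_image_iff)
  then obtain \<H>' where "\<H>' \<subseteq> \<H>" "finite \<H>'" "\<Union>\<H>' = \<Union>\<H>"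
    using assms(1) unfolding noetherian_family_def by meson
  moreover have "\<Union>(k ` \<H>') = \<Union>(k ` \<H>)"
    by (metis k \<open>\<Union>\<H>' = \<Union>\<H>\<close>)
  ultimately show "\<exists>\<G>' \<subseteq> \<G>. finite \<G>' \<and> \<Union>\<G>' = \<Union>\<G>"
    using \<H> by (intro exI[of _ "k ` \<H>'"]) auto
qed

lemma noetherian_family_recurrence:
  fixes Y :: "nat set"
  assumes "noetherian_family \<A>" "infinite Y" "U ` Y \<subseteq> \<A>"
    and x: "\<And>n. n \<in> Y \<Longrightarrow> x n \<in> U n"
  shows "\<exists>k\<in>Y. \<exists>n\<in>Y. k < n \<and> x n \<in> U k"
proof -
  obtain \<G> where "\<G> \<subseteq> U ` Y" "finite \<G>" "\<Union>\<G> = \<Union>(U ` Y)"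
    using assms(1,3) unfolding noetherian_family_def by meson
  then obtain Y' where Y': "Y' \<subseteq> Y" "finite Y'" "\<Union>(U ` Y') = \<Union>(U ` Y)"
    by (metis finite_subset_image)
  obtain n where n: "n \<in> Y" "Max (insert 0 Y') < n"
    using \<open>infinite Y\<close> unfolding infinite_nat_iff_unbounded by blast
  have "x n \<in> \<Union>(U ` Y')"
    using x[OF n(1)] n(1) Y'(3) by blast
  then obtain k where "k \<in> Y'" "x n \<in> U k"
    by blast
  moreover have "k < n"
    using \<open>k \<in> Y'\<close> Y'(2) n(2) by (meson Max_ge finite_insert insertCI le_less_trans)
  ultimately show ?thesis
    using Y'(1) n(1) by blast
qed

lemma not_noetherian_family_sequence:
  assumes "\<not> noetherian_family \<A>"
  obtains U :: "nat \<Rightarrow> 'a set" where "range U \<subseteq> \<A>" "\<And>n. \<not> U n \<subseteq> (\<Union>k<n. U k)"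
proof -
  obtain \<G> where \<G>: "\<G> \<subseteq> \<A>" and bad: "\<And>\<G>'. \<G>' \<subseteq> \<G> \<Longrightarrow> finite \<G>' \<Longrightarrow> \<Union>\<G>' \<noteq> \<Union>\<G>"
    using assms unfolding noetherian_family_def by auto
  have escape: "\<exists>V. V \<in> \<G> \<and> \<not> V \<subseteq> \<Union>\<G>'" if "\<G>' \<subseteq> \<G>" "finite \<G>'" for \<G>'
  proof -
    have "\<Union>\<G>' \<subseteq> \<Union>\<G>"
      using that(1) by blast
    then have "\<not> \<Union>\<G> \<subseteq> \<Union>\<G>'"
      using bad[OF that] by blast
    then show ?thesis
      by blast
  qed
  define next_set where "next_set \<G>' = (SOME V. V \<in> \<G> \<and> \<not> V \<subseteq> \<Union>\<G>')" for \<G>'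
  define chosen where "chosen = rec_nat {} (\<lambda>_ \<G>'. insert (next_set \<G>') \<G>')"
  define U where "U n = next_set (chosen n)" for n
  have chosen_Suc: "chosen (Suc n) = insert (U n) (chosen n)" for n
    by (simp add: chosen_def U_def)
  have chosen_eq: "chosen n = U ` {..<n}" for n
  proof (induction n)
    case 0
    then show ?case
      by (simp add: chosen_def)
  next
    case (Suc n)
    then show ?case
      by (simp add: chosen_Suc lessThan_Suc)
  qed
  have U_eq: "U n = (SOME V. V \<in> \<G> \<and> \<not> V \<subseteq> \<Union>(U ` {..<n}))" for n
    by (subst U_def) (simp only: next_set_def chosen_eq)
  have U: "U n \<in> \<G> \<and> \<not> U n \<subseteq> (\<Union>k<n. U k)" for n
  proof (induction n rule: less_induct)
    case (less n)
    then have "\<exists>V. V \<in> \<G> \<and> \<not> V \<subseteq> \<Union>(U ` {..<n})"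
      by (intro escape) auto
    then show ?case
      unfolding U_eq[of n] by (rule someI_ex)
  qed
  show ?thesis
    using U \<G> by (intro that[of U]) blast+
qed

lemma Ramsey_pairs_two_relations:
  fixes P Q :: "nat \<Rightarrow> nat \<Rightarrow> bool"
  assumes "\<And>k n. k < n \<Longrightarrow> P k n \<or> Q k n"
  obtains Y where "infinite Y"
    "(\<forall>k\<in>Y. \<forall>n\<in>Y. k < n \<longrightarrow> P k n) \<or> (\<forall>k\<in>Y. \<forall>n\<in>Y. k < n \<longrightarrow> Q k n)"
proof -
  define colour where "colour X = (if P (Min X) (Max X) then 0 else 1 :: nat)" for X :: "nat set"
  have "\<forall>k\<in>UNIV. \<forall>n\<in>UNIV. k \<noteq> n \<longrightarrow> colour {k, n} < 2"
    by (simp add: colour_def)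
  from Ramsey2[OF infinite_UNIV_nat this] obtain Y t where Y: "infinite Y" "t < 2"
    and hom: "\<forall>k\<in>Y. \<forall>n\<in>Y. k \<noteq> n \<longrightarrow> colour {k, n} = t"
    by blast
  have colour_pair: "(if P k n then 0 else 1) = t" if "k \<in> Y" "n \<in> Y" "k < n" for k n
  proof -
    have "k \<noteq> n"
      using that(3) by simp
    then have "colour {k, n} = t"
      using hom that(1,2) by blast
    then show ?thesis
      using \<open>k < n\<close> by (simp add: colour_def)
  qed
  have "t = 0 \<or> t = 1"
    using Y(2) by auto
  then have "(\<forall>k\<in>Y. \<forall>n\<in>Y. k < n \<longrightarrow> P k n) \<or> (\<forall>k\<in>Y. \<forall>n\<in>Y. k < n \<longrightarrow> Q k n)"
  proof
    assume "t = 0"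
    then show ?thesis
      using colour_pair by (metis zero_neq_one)
  next
    assume "t = 1"
    then show ?thesis
      using colour_pair assms by (metis zero_neq_one)
  qed
  with Y(1) show ?thesis
    using that by blast
qed

lemma noetherian_family_Times:
  assumes "noetherian_family \<A>" "noetherian_family \<B>"
  shows "noetherian_family {U \<times> V | U V. U \<in> \<A> \<and> V \<in> \<B>}"
proof (rule ccontr)
  assume not_noetherian: "\<not> ?thesis"
  obtain R :: "nat \<Rightarrow> _" where R: "range R \<subseteq> {U \<times> V | U V. U \<in> \<A> \<and> V \<in> \<B>}"
    and bad: "\<And>n. \<not> R n \<subseteq> (\<Union>k<n. R k)"
    by (rule not_noetherian_family_sequence[OF not_noetherian]) blast
  have "\<forall>n. \<exists>U V. U \<in> \<A> \<and> V \<in> \<B> \<and> R n = U \<times> V"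
    using R by blast
  then obtain U V where UV: "\<And>n. U n \<in> \<A>" "\<And>n. V n \<in> \<B>" "\<And>n. R n = U n \<times> V n"
    by metis
  have "\<forall>n. \<exists>z. z \<in> U n \<times> V n \<and> (\<forall>k<n. z \<notin> U k \<times> V k)"
  proof
    fix n
    show "\<exists>z. z \<in> U n \<times> V n \<and> (\<forall>k<n. z \<notin> U k \<times> V k)"
      using bad[of n] unfolding UV(3) subset_iff UN_iff lessThan_iff by blast
  qed
  then obtain z where z: "\<And>n. z n \<in> U n \<times> V n" "\<And>k n. k < n \<Longrightarrow> z n \<notin> U k \<times> V k"
    by metis
  have "fst (z n) \<notin> U k \<or> snd (z n) \<notin> V k" if "k < n" for k n
    using z(2)[OF that] by (simp add: mem_Times_iff)
  \<comment> \<open>Colour \<open>k < n\<close> by the coordinate of \<open>z n\<close> escaping \<open>U k \<times> V k\<close>.\<close>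
  then obtain Y where "infinite Y"
    "(\<forall>k\<in>Y. \<forall>n\<in>Y. k < n \<longrightarrow> fst (z n) \<notin> U k) \<or> (\<forall>k\<in>Y. \<forall>n\<in>Y. k < n \<longrightarrow> snd (z n) \<notin> V k)"
    by (rule Ramsey_pairs_two_relations)
  moreover have "\<exists>k\<in>Y. \<exists>n\<in>Y. k < n \<and> fst (z n) \<in> U k"
    using z(1) by (intro noetherian_family_recurrence[OF assms(1) \<open>infinite Y\<close>]) (auto simp: UV mem_Times_iff)
  moreover have "\<exists>k\<in>Y. \<exists>n\<in>Y. k < n \<and> snd (z n) \<in> V k"
    using z(1) by (intro noetherian_family_recurrence[OF assms(2) \<open>infinite Y\<close>]) (auto simp: UV mem_Times_iff)
  ultimately show False
    by blast
qed

section \<open>Generated topologies\<close>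

lemma openin_gen_top: "openin (gen_top \<B>) = generate_topology \<B>"
proof -
  have "istopology (generate_topology \<B>)"
    unfolding istopology_def by (auto intro: generate_topology.intros)
  then show ?thesis
    unfolding gen_top_def by (rule topology_inverse')
qed

lemma topspace_gen_top [simp]: "topspace (gen_top \<B>) = UNIV"
  unfolding topspace_def openin_gen_top by (auto intro: generate_topology.UNIV)

lemma generate_topology_subbase_le:
  assumes "generate_topology \<B> U" "\<And>B. B \<in> \<B> \<Longrightarrow> generate_topology \<B>' B"
  shows "generate_topology \<B>' U"
  using assms by (induction rule: generate_topology.induct) (auto intro: generate_topology.intros)

lemma top_le_gen_top_mono:
  assumes "\<B> \<subseteq> \<B>'"
  shows "top_le (gen_top \<B>) (gen_top \<B>')"
  unfolding top_le_def openin_gen_top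
proof (intro allI impI)
  fix U assume "generate_topology \<B> U"
  then show "generate_topology \<B>' U"
    by (rule generate_topology_subbase_le) (use assms in \<open>auto intro: generate_topology.Basis\<close>)
qed

lemma compact_space_noetherian_subbase:
  assumes "noetherian_family \<B>" "K \<subseteq> \<Union>\<B>"
  shows "compact_space (topology (arbitrary union_of (finite intersection_of (\<lambda>B. B \<in> \<B>) relative_to K)))"
proof (rule Alexander_subbase_alt[OF assms(2)])
  fix \<C> assume "\<C> \<subseteq> \<B>" "K \<subseteq> \<Union>\<C>"
  then obtain \<C>' where "\<C>' \<subseteq> \<C>" "finite \<C>'" "\<Union>\<C>' = \<Union>\<C>"
    using assms(1) unfolding noetherian_family_def by meson
  moreover have "K \<subseteq> \<Union>\<C>'"
    using \<open>\<Union>\<C>' = \<Union>\<C>\<close> \<open>K \<subseteq> \<Union>\<C>\<close> by simp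
  ultimately show "\<exists>\<C>'. finite \<C>' \<and> \<C>' \<subseteq> \<C> \<and> K \<subseteq> \<Union>\<C>'"
    by blast
qed simp

lemma openin_subbase_generate_topology:
  assumes "generate_topology \<B> U" "\<B> \<subseteq> \<B>'" "UNIV \<in> \<B>'"
  shows "openin (topology (arbitrary union_of (finite intersection_of (\<lambda>B. B \<in> \<B>') relative_to K))) (U \<inter> K)"
    (is "openin ?X _")
  using assms(1)
proof (induction rule: generate_topology.induct)
  case UNIV
  show ?case
    using openin_topspace[of ?X] by simp
next
  case (Int a b)
  have "a \<inter> b \<inter> K = (a \<inter> K) \<inter> (b \<inter> K)"
    by blast
  then show ?case
    using Int.IH by (simp add: openin_Int)
next
  case (UN \<K>)
  have Union_Int: "\<Union>\<K> \<inter> K = (\<Union>U\<in>\<K>. U \<inter> K)"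
    by blast
  show ?case
    unfolding Union_Int by (rule openin_Union) (use UN.IH in auto)
next
  case (Basis B)
  then have "(finite intersection_of (\<lambda>B. B \<in> \<B>') relative_to K) (B \<inter> K)"
    using assms(2) unfolding relative_to_def by (auto intro: finite_intersection_of_inc)
  then show ?case
    unfolding openin_subbase by (rule arbitrary_union_of_inc)
qed

lemma noetherian_top_gen_top:
  assumes "noetherian_family \<B>"
  shows "noetherian_top (gen_top \<B>)"
  unfolding noetherian_top_def
proof (intro allI impI)
  fix K :: "'a set"
  \<comment> \<open>\<open>UNIV\<close> is added so that the subbase covers \<open>K\<close>, as Alexander's theorem requires.\<close>
  define X where "X = topology (arbitrary union_of (finite intersection_of (\<lambda>B. B \<in> insert UNIV \<B>) relative_to K))"
  have "compact_space X"
    unfolding X_def using assms by (intro compact_space_noetherian_subbase noetherian_family_insert) auto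
  then have "compactin X K"
    by (simp add: compact_space_def X_def)
  have open_trace: "openin X (U \<inter> K)" if "generate_topology \<B> U" for U
    unfolding X_def using that by (rule openin_subbase_generate_topology) auto
  show "compactin (gen_top \<B>) K"
    unfolding compactin_def openin_gen_top
  proof (intro conjI allI impI; clarify?)
    fix \<U> assume "\<forall>U\<in>\<U>. generate_topology \<B> U" "K \<subseteq> \<Union>\<U>"
    then have "\<forall>V\<in>(\<lambda>U. U \<inter> K) ` \<U>. openin X V" "K \<subseteq> \<Union>((\<lambda>U. U \<inter> K) ` \<U>)"
      using open_trace by auto
    then obtain \<V> where "finite \<V>" "\<V> \<subseteq> (\<lambda>U. U \<inter> K) ` \<U>" "K \<subseteq> \<Union>\<V>"
      using \<open>compactin X K\<close> unfolding compactin_def by meson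
    then obtain \<U>' where "\<U>' \<subseteq> \<U>" "finite \<U>'" "\<V> = (\<lambda>U. U \<inter> K) ` \<U>'"
      by (meson finite_subset_image)
    moreover have "K \<subseteq> \<Union>\<U>'"
      using \<open>K \<subseteq> \<Union>\<V>\<close> \<open>\<V> = (\<lambda>U. U \<inter> K) ` \<U>'\<close> by auto
    ultimately show "\<exists>\<U>'. finite \<U>' \<and> \<U>' \<subseteq> \<U> \<and> K \<subseteq> \<Union>\<U>'"
      by blast
  qed simp
qed

lemma top_restrict_gen_top:
  "top_restrict (gen_top \<B>) H = gen_top (insert H ((\<lambda>B. B \<inter> H) ` \<B>))"
proof -
  let ?traces = "insert H ((\<lambda>B. B \<inter> H) ` \<B>)"
  have restrict_le: "generate_topology ?traces (U \<inter> H)" if "generate_topology \<B> U" for U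
    using that
  proof (induction rule: generate_topology.induct)
    case UNIV
    show ?case
      by (simp add: generate_topology.Basis)
  next
    case (Int a b)
    have "a \<inter> b \<inter> H = (a \<inter> H) \<inter> (b \<inter> H)"
      by blast
    then show ?case
      using Int.IH by (simp add: generate_topology.Int)
  next
    case (UN \<K>)
    have Union_Int: "\<Union>\<K> \<inter> H = (\<Union>U\<in>\<K>. U \<inter> H)"
      by blast
    show ?case
      unfolding Union_Int by (rule generate_topology.UN) (use UN.IH in auto)
  next
    case (Basis B)
    show ?case
      by (rule generate_topology.Basis) (use Basis in blast)
  qed
  have trace_open: "W \<in> {U \<inter> H |U. openin (gen_top \<B>) U}" if "W \<in> ?traces" for W
  proof -
    from that consider "W = H" | B where "B \<in> \<B>" "W = B \<inter> H"
      by blast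
    then show ?thesis
    proof cases
      case 1
      then show ?thesis
        by (intro CollectI exI[of _ UNIV]) (simp add: openin_gen_top generate_topology.UNIV)
    next
      case 2
      then show ?thesis
        by (intro CollectI exI[of _ B]) (simp add: openin_gen_top generate_topology.Basis)
    qed
  qed
  have "generate_topology {U \<inter> H |U. openin (gen_top \<B>) U} = generate_topology ?traces"
  proof (intro ext iffI)
    fix V assume "generate_topology {U \<inter> H |U. openin (gen_top \<B>) U} V"
    then show "generate_topology ?traces V"
      by (rule generate_topology_subbase_le) (auto simp: openin_gen_top restrict_le)
  next
    fix V assume "generate_topology ?traces V"
    then show "generate_topology {U \<inter> H |U. openin (gen_top \<B>) U} V"
      by (rule generate_topology_subbase_le) (rule generate_topology.Basis, rule trace_open)
  qed
  then show ?thesis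
    unfolding top_restrict_def gen_top_def by simp
qed

lemma top_restrict_gen_top_cong:
  "(\<lambda>B. B \<inter> H) ` \<B> = (\<lambda>B. B \<inter> H) ` \<B>' \<Longrightarrow> top_restrict (gen_top \<B>) H = top_restrict (gen_top \<B>') H"
  by (simp add: top_restrict_gen_top)

lemma openin_top_restrict_trace:
  assumes "topspace \<tau> = UNIV" "openin (top_restrict \<tau> H) A"
  obtains U where "openin \<tau> U" "A \<inter> H = U \<inter> H"
proof -
  have "generate_topology {U \<inter> H | U. openin \<tau> U} A"
    using assms(2) unfolding top_restrict_def openin_gen_top .
  then have "\<exists>U. openin \<tau> U \<and> A \<inter> H = U \<inter> H"
  proof (induction rule: generate_topology.induct)
    case UNIV
    show ?case
      using assms(1) openin_topspace[of \<tau>] by (intro exI[of _ UNIV]) simp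
  next
    case (Int a b)
    then obtain U V where "openin \<tau> U" "a \<inter> H = U \<inter> H" "openin \<tau> V" "b \<inter> H = V \<inter> H"
      by blast
    moreover have "a \<inter> b \<inter> H = (a \<inter> H) \<inter> (b \<inter> H)" "(U \<inter> H) \<inter> (V \<inter> H) = U \<inter> V \<inter> H"
      by blast+
    ultimately show ?case
      by (intro exI[of _ "U \<inter> V"]) (simp add: openin_Int)
  next
    case (UN \<K>)
    then obtain f where f: "\<And>A. A \<in> \<K> \<Longrightarrow> openin \<tau> (f A) \<and> A \<inter> H = f A \<inter> H"
      by metis
    have "\<Union>\<K> \<inter> H = (\<Union>A\<in>\<K>. A \<inter> H)"
      by blast
    also have "\<dots> = (\<Union>A\<in>\<K>. f A \<inter> H)"
      using f by simp
    also have "\<dots> = \<Union>(f ` \<K>) \<inter> H"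
      by blast
    finally have "\<Union>\<K> \<inter> H = \<Union>(f ` \<K>) \<inter> H" .
    moreover have "openin \<tau> (\<Union>(f ` \<K>))"
      using f by (auto intro: openin_Union)
    ultimately show ?case
      by (intro exI[of _ "\<Union>(f ` \<K>)"] conjI)
  next
    case (Basis B)
    then obtain U where "openin \<tau> U" "B = U \<inter> H"
      by blast
    then show ?case
      by (intro exI[of _ U]) auto
  qed
  then show ?thesis
    by (elim exE conjE) (rule that)
qed

lemma traces_top_restrict:
  assumes "topspace \<tau> = UNIV"
  shows "{A \<inter> H | A. openin (top_restrict \<tau> H) A} = {U \<inter> H | U. openin \<tau> U}"
proof (intro equalityI subsetI)
  fix V assume "V \<in> {A \<inter> H | A. openin (top_restrict \<tau> H) A}"
  then obtain A where A: "V = A \<inter> H" "openin (top_restrict \<tau> H) A"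
    by blast
  obtain U where "openin \<tau> U" "A \<inter> H = U \<inter> H"
    using openin_top_restrict_trace[OF assms A(2)] .
  then show "V \<in> {U \<inter> H | U. openin \<tau> U}"
    using A(1) by (intro CollectI exI[of _ U]) simp
next
  fix V assume "V \<in> {U \<inter> H | U. openin \<tau> U}"
  then obtain U where U: "V = U \<inter> H" "openin \<tau> U"
    by blast
  then have "openin (top_restrict \<tau> H) V"
    unfolding top_restrict_def openin_gen_top by (intro generate_topology.Basis CollectI exI[of _ U]) simp
  then show "V \<in> {A \<inter> H | A. openin (top_restrict \<tau> H) A}"
    using U(1) by (intro CollectI exI[of _ V]) auto
qed

section \<open>The map S\<close>

definition higman_upclosed :: "'a topology \<Rightarrow> 'a list set \<Rightarrow> bool" where
  "higman_upclosed \<theta> X \<longleftrightarrow> (\<forall>u w. u \<in> X \<longrightarrow> higman_le \<theta> u w \<longrightarrow> w \<in> X)"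

lemma higman_le_trans: "higman_le \<theta> u v \<Longrightarrow> higman_le \<theta> v w \<Longrightarrow> higman_le \<theta> u w"
  unfolding higman_le_def by (rule list_emb_trans) (auto simp: spec_le_def)

lemma higman_upclosed_up_higman: "higman_upclosed \<theta> (up_higman \<theta> A)"
  unfolding higman_upclosed_def up_higman_def using higman_le_trans by blast

lemma higman_upclosed_generate_topology:
  assumes "generate_topology \<B> U" "\<And>B. B \<in> \<B> \<Longrightarrow> higman_upclosed \<theta> B"
  shows "higman_upclosed \<theta> U"
  using assms by (induction rule: generate_topology.induct) (fastforce simp: higman_upclosed_def)+

lemma up_higman_word_concat_Int:
  assumes down: "\<And>u w. w \<in> H \<Longrightarrow> higman_le \<theta> u w \<Longrightarrow> u \<in> H"
  shows "up_higman \<theta> (word_concat A B) \<inter> H = up_higman \<theta> (word_concat (A \<inter> H) (B \<inter> H)) \<inter> H"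
proof
  show "up_higman \<theta> (word_concat (A \<inter> H) (B \<inter> H)) \<inter> H \<subseteq> up_higman \<theta> (word_concat A B) \<inter> H"
    unfolding up_higman_def word_concat_def by blast
  show "up_higman \<theta> (word_concat A B) \<inter> H \<subseteq> up_higman \<theta> (word_concat (A \<inter> H) (B \<inter> H)) \<inter> H"
  proof
    fix w assume w: "w \<in> up_higman \<theta> (word_concat A B) \<inter> H"
    then obtain u v where uv: "u \<in> A" "v \<in> B" "higman_le \<theta> (u @ v) w"
      unfolding up_higman_def word_concat_def by blast
    then obtain w\<^sub>1 w\<^sub>2 where "w = w\<^sub>1 @ w\<^sub>2" "higman_le \<theta> u w\<^sub>1" "higman_le \<theta> v w\<^sub>2"
      unfolding higman_le_def using list_emb_appendD by blast
    then have "higman_le \<theta> u w" "higman_le \<theta> v w"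
      unfolding higman_le_def by auto
    then have "u \<in> H" "v \<in> H"
      using down w by auto
    then show "w \<in> up_higman \<theta> (word_concat (A \<inter> H) (B \<inter> H)) \<inter> H"
      using uv w unfolding up_higman_def word_concat_def by blast
  qed
qed

definition S_subbase :: "'a topology \<Rightarrow> 'a list topology \<Rightarrow> 'a list set set" where
  "S_subbase \<theta> \<tau> =
     {up_higman \<theta> (word_concat U V) | U V. openin \<tau> U \<and> openin \<tau> V}
     \<union> {up_higman \<theta> ((\<lambda>a. [a]) ` W) | W. openin \<theta> W}"

lemma S_map_eq_gen_top: "S_map \<theta> \<tau> = gen_top (S_subbase \<theta> \<tau>)"
  unfolding S_map_def S_subbase_def ..

lemma openin_S_map_higman_upclosed: "openin (S_map \<theta> \<tau>) U \<Longrightarrow> higman_upclosed \<theta> U"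
  unfolding S_map_eq_gen_top openin_gen_top S_subbase_def
  by (erule higman_upclosed_generate_topology) (auto simp: higman_upclosed_up_higman)

lemma S_subbase_mono: "top_le \<tau> \<sigma> \<Longrightarrow> S_subbase \<theta> \<tau> \<subseteq> S_subbase \<theta> \<sigma>"
  unfolding S_subbase_def top_le_def by blast

lemma S_map_mono: "top_le \<tau> \<sigma> \<Longrightarrow> top_le (S_map \<theta> \<tau>) (S_map \<theta> \<sigma>)"
  unfolding S_map_eq_gen_top by (intro top_le_gen_top_mono S_subbase_mono)

lemma up_higman_Union: "up_higman \<theta> (\<Union>\<A>) = (\<Union>A\<in>\<A>. up_higman \<theta> A)"
  unfolding up_higman_def by blast

lemma word_concat_eq_image: "word_concat U V = (\<lambda>(u, v). u @ v) ` (U \<times> V)"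
  unfolding word_concat_def by auto

lemma noetherian_top_S_map:
  assumes "noetherian_top \<theta>" "noetherian_top \<tau>"
  shows "noetherian_top (S_map \<theta> \<tau>)"
proof -
  let ?concat = "\<lambda>R. up_higman \<theta> ((\<lambda>(u, v). u @ v) ` R)"
  let ?letters = "\<lambda>W. up_higman \<theta> ((\<lambda>a. [a]) ` W)"
  let ?rectangles = "{U \<times> V | U V. U \<in> {U. openin \<tau> U} \<and> V \<in> {U. openin \<tau> U}}"
  have "{?concat (U \<times> V) | U V. openin \<tau> U \<and> openin \<tau> V} = ?concat ` ?rectangles"
    by blast
  moreover have "{?letters W | W. openin \<theta> W} = ?letters ` {W. openin \<theta> W}"
    by blast
  ultimately have subbase_eq: "S_subbase \<theta> \<tau> = ?concat ` ?rectangles \<union> ?letters ` {W. openin \<theta> W}"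
    unfolding S_subbase_def word_concat_eq_image by simp
  have "noetherian_family (?concat ` ?rectangles)"
    using assms(2) by (intro noetherian_family_image noetherian_family_Times noetherian_family_openin)
      (simp_all add: image_Union up_higman_Union)
  moreover have "noetherian_family (?letters ` {W. openin \<theta> W})"
    using assms(1) by (intro noetherian_family_image noetherian_family_openin)
      (simp_all add: image_Union up_higman_Union)
  ultimately have "noetherian_family (S_subbase \<theta> \<tau>)"
    unfolding subbase_eq by (rule noetherian_family_Un)
  then show ?thesis
    unfolding S_map_eq_gen_top by (rule noetherian_top_gen_top)
qed

lemma S_subbase_traces_subset:
  assumes down: "\<And>u w. w \<in> H \<Longrightarrow> higman_le \<theta> u w \<Longrightarrow> u \<in> H"
    and traces: "{U \<inter> H | U. openin \<tau> U} \<subseteq> {U \<inter> H | U. openin \<sigma> U}"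
  shows "(\<lambda>B. B \<inter> H) ` S_subbase \<theta> \<tau> \<subseteq> (\<lambda>B. B \<inter> H) ` S_subbase \<theta> \<sigma>"
proof (rule image_subsetI)
  fix B assume "B \<in> S_subbase \<theta> \<tau>"
  then consider (concat) U V where "B = up_higman \<theta> (word_concat U V)" "openin \<tau> U" "openin \<tau> V"
    | (letters) W where "B = up_higman \<theta> ((\<lambda>a. [a]) ` W)" "openin \<theta> W"
    unfolding S_subbase_def by blast
  then show "B \<inter> H \<in> (\<lambda>B. B \<inter> H) ` S_subbase \<theta> \<sigma>"
  proof cases
    case concat
    have "U \<inter> H \<in> {U \<inter> H | U. openin \<sigma> U}" "V \<inter> H \<in> {U \<inter> H | U. openin \<sigma> U}"
      using traces concat(2,3) by blast+
    then obtain U' V' where U': "openin \<sigma> U'" "U \<inter> H = U' \<inter> H"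
      and V': "openin \<sigma> V'" "V \<inter> H = V' \<inter> H"
      by blast
    have "B \<inter> H = up_higman \<theta> (word_concat (U \<inter> H) (V \<inter> H)) \<inter> H"
      unfolding concat(1) using down by (rule up_higman_word_concat_Int)
    also have "\<dots> = up_higman \<theta> (word_concat (U' \<inter> H) (V' \<inter> H)) \<inter> H"
      by (simp only: U'(2) V'(2))
    also have "\<dots> = up_higman \<theta> (word_concat U' V') \<inter> H"
      using down by (rule up_higman_word_concat_Int[symmetric])
    finally have "B \<inter> H = up_higman \<theta> (word_concat U' V') \<inter> H" .
    moreover have "up_higman \<theta> (word_concat U' V') \<in> S_subbase \<theta> \<sigma>"
      unfolding S_subbase_def using U'(1) V'(1) by blast
    ultimately show ?thesis
      by (rule image_eqI)
  next
    case letters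
    then have "B \<in> S_subbase \<theta> \<sigma>"
      unfolding S_subbase_def by blast
    then show ?thesis
      by (rule imageI)
  qed
qed

lemma top_restrict_S_map:
  assumes "topspace \<tau> = UNIV" "top_le \<tau> (S_map \<theta> \<tau>)" "closedin \<tau> H"
  shows "top_restrict (S_map \<theta> \<tau>) H = top_restrict (S_map \<theta> (top_restrict \<tau> H)) H"
proof -
  have "openin (S_map \<theta> \<tau>) (- H)"
    using assms unfolding closedin_def top_le_def by (simp add: Compl_eq_Diff_UNIV)
  then have down: "u \<in> H" if "w \<in> H" "higman_le \<theta> u w" for u w
    using that openin_S_map_higman_upclosed unfolding higman_upclosed_def by blast
  have traces: "{U \<inter> H | U. openin (top_restrict \<tau> H) U} = {U \<inter> H | U. openin \<tau> U}"
    using assms(1) by (rule traces_top_restrict)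
  show ?thesis
    unfolding S_map_eq_gen_top
  proof (rule top_restrict_gen_top_cong, rule equalityI)
    show "(\<lambda>B. B \<inter> H) ` S_subbase \<theta> \<tau> \<subseteq> (\<lambda>B. B \<inter> H) ` S_subbase \<theta> (top_restrict \<tau> H)"
      using down traces by (intro S_subbase_traces_subset) auto
    show "(\<lambda>B. B \<inter> H) ` S_subbase \<theta> (top_restrict \<tau> H) \<subseteq> (\<lambda>B. B \<inter> H) ` S_subbase \<theta> \<tau>"
      using down traces by (intro S_subbase_traces_subset) auto
  qed
qed

theorem mainTheorem12:
  fixes \<theta> :: "'a topology"
  assumes "topspace \<theta> = UNIV"
    and "noetherian_top \<theta>"
  shows "topology_expander (S_map \<theta>)"
  unfolding topology_expander_def refinement_function_def
proof (intro conjI allI impI)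
  show "topspace (S_map \<theta> \<tau>) = UNIV" for \<tau>
    by (simp add: S_map_eq_gen_top)
  show "top_le (S_map \<theta> \<tau>) (S_map \<theta> \<sigma>)" if "top_le \<tau> \<sigma>" for \<tau> \<sigma>
    using that by (rule S_map_mono)
  show "noetherian_top (S_map \<theta> \<tau>)" if "noetherian_top \<tau>" for \<tau>
    using assms(2) that by (rule noetherian_top_S_map)
  show "top_restrict (S_map \<theta> \<tau>) H = top_restrict (S_map \<theta> (top_restrict \<tau> H)) H"
    if "topspace \<tau> = UNIV" "top_le \<tau> (S_map \<theta> \<tau>)" "closedin \<tau> H" for \<tau> H
    using that by (rule top_restrict_S_map)
qed

end
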